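(* Let $(X,d)$ be a complete metric space, let $T:X\to P(X)$ be a multivalued operator with $SFix(T)=\{x^*\}$, and let $T_G(x)=\{G(x,u):u\in T(x)\}$ be an admissible perturbation of $T$ corresponding to a mapping $G:X\times X\to X$ satisfying $G(x,x)=x$ for all $x$ and ($G(x,y)=x\Rightarrow y=x$). Let $F:X\to P(X)$ be a multivalued operator with $SFix(F)\neq\emptyset$. Suppose: 1) $T_G$ is a $\Psi$-MP operator with $SFix(T_G)=\{x^*\}$; 2) there is $c>0$ with $D(x,T_G(x))\le c\,D(x,T(x))$ for all $x\in X$; 3) there is $\eta>0$ with $H(T(x),F(x))\le\eta$ for all $x\in X$. Then (i) $d(x,x^* )\le\Psi(c\,D(x,T(x)))$ for all $x\in X$, and (ii) $d(x^*,y^* )\le\Psi(c\eta)$ for all $y^*\in SFix(F)$.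
   Context: $P(X)$ is the family of nonempty subsets of $X$; $Fix(S)=\{x:x\in S(x)\}$, $SFix(S)=\{x:S(x)=\{x\}\}$. For nonempty $A,B\subseteq X$: $D(a,B)=\inf_{b\in B}d(a,b)$, $e(A,B)=\sup_{a\in A}D(a,B)$, $H(A,B)=\max\{e(A,B),e(B,A)\}$. A multivalued operator $S:X\to P(X)$ is a multivalued Picard operator if $SFix(S)=Fix(S)=\{x^*\}$ and $H(S^n(x),\{x^*\})\to0$ for each $x\in X$ (with $S^0(x)=\{x\}$, $S^n(x)=\bigcup_{y\in S^{n-1}(x)}S(y)$). Given an increasing function $\Psi:\mathbb R_+\to\mathbb R_+$, continuous at $0$ with $\Psi(0)=0$, $S$ is a $\Psi$-MP operator if it is a multivalued Picard operator with unique strict fixed point $x^*$ and $d(x,x^* )\le\Psi(D(x,S(x)))$ for all $x\in X$. *)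

theory Defs
  imports "HOL-Analysis.Analysis"
begin

definition mv_operator :: "('a \<Rightarrow> 'a set) \<Rightarrow> bool" where
  "mv_operator S \<longleftrightarrow> (\<forall>x. S x \<noteq> {})"

definition Fix :: "('a \<Rightarrow> 'a set) \<Rightarrow> 'a set" where
  "Fix S = {x. x \<in> S x}"

definition SFix :: "('a \<Rightarrow> 'a set) \<Rightarrow> 'a set" where
  "SFix S = {x. S x = {x}}"

text \<open>D(a,B) is the library's infdist. Excess and Hausdorff-Pompeiu distance,
  valued in the extended reals (they may be infinite).\<close>

definition excess :: "'a::metric_space set \<Rightarrow> 'a set \<Rightarrow> ereal" where
  "excess A B = (SUP a\<in>A. ereal (infdist a B))"

definition Hdist :: "'a::metric_space set \<Rightarrow> 'a set \<Rightarrow> ereal" where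
  "Hdist A B = max (excess A B) (excess B A)"

fun mv_iter :: "('a \<Rightarrow> 'a set) \<Rightarrow> nat \<Rightarrow> 'a \<Rightarrow> 'a set" where
  "mv_iter S 0 x = {x}"
| "mv_iter S (Suc n) x = (\<Union>y\<in>mv_iter S n x. S y)"

definition mv_picard :: "('a::metric_space \<Rightarrow> 'a set) \<Rightarrow> 'a \<Rightarrow> bool" where
  "mv_picard S xs \<longleftrightarrow> SFix S = {xs} \<and> Fix S = {xs} \<and>
     (\<forall>x. ((\<lambda>n. Hdist (mv_iter S n x) {xs}) \<longlongrightarrow> 0) sequentially)"

definition psi_function :: "(real \<Rightarrow> real) \<Rightarrow> bool" where
  "psi_function \<Psi> \<longleftrightarrow> mono_on {0..} \<Psi> \<and> (\<forall>t\<ge>0. \<Psi> t \<ge> 0) \<and> \<Psi> 0 = 0 \<and>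
     continuous (at 0 within {0..}) \<Psi>"

definition psi_MP :: "(real \<Rightarrow> real) \<Rightarrow> ('a::metric_space \<Rightarrow> 'a set) \<Rightarrow> 'a \<Rightarrow> bool" where
  "psi_MP \<Psi> S xs \<longleftrightarrow> mv_picard S xs \<and> (\<forall>x. dist x xs \<le> \<Psi> (infdist x (S x)))"

definition perturb :: "('a \<Rightarrow> 'a set) \<Rightarrow> ('a \<Rightarrow> 'a \<Rightarrow> 'a) \<Rightarrow> 'a \<Rightarrow> 'a set" where
  "perturb T G x = (\<lambda>u. G x u) ` T x"

definition admissible_G :: "('a \<Rightarrow> 'a \<Rightarrow> 'a) \<Rightarrow> bool" where
  "admissible_G G \<longleftrightarrow> (\<forall>x. G x x = x) \<and> (\<forall>x y. G x y = x \<longrightarrow> y = x)"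

end

theory Submission
  imports Defs
begin

text \<open>Both estimates follow from the inequality d(x,x*) \<le> \<Psi>(D(x,T_G(x))) of the
  \<Psi>-MP operator T_G, the comparison D(x,T_G(x)) \<le> c D(x,T(x)) and the monotonicity
  of \<Psi>. For (ii), a strict fixed point y* of F has F(y*) = {y*}, so
  D(y*,T(y*)) = e({y*},T(y*)) \<le> H(T(y*),F(y*)) \<le> \<eta>.\<close>

lemma psi_function_mono:
  assumes "psi_function \<Psi>" and "0 \<le> s" and "s \<le> t"
  shows "\<Psi> s \<le> \<Psi> t"
  using assms unfolding psi_function_def by (auto intro: mono_onD)

lemma psi_MP_dist_le:
  assumes "psi_MP \<Psi> S xs" and "psi_function \<Psi>" and "infdist x (S x) \<le> t"
  shows "dist x xs \<le> \<Psi> t"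
proof -
  have "dist x xs \<le> \<Psi> (infdist x (S x))"
    using assms(1) unfolding psi_MP_def by blast
  also have "\<dots> \<le> \<Psi> t"
    using assms(2,3) by (rule psi_function_mono[OF _ infdist_nonneg])
  finally show ?thesis .
qed

lemma infdist_le_Hdist_singleton: "ereal (infdist y B) \<le> Hdist B {y}"
  unfolding Hdist_def excess_def by simp

theorem mainTheorem4:
  fixes T F :: "'a::complete_space \<Rightarrow> 'a set"
    and G :: "'a \<Rightarrow> 'a \<Rightarrow> 'a"
    and \<Psi> :: "real \<Rightarrow> real"
    and xs :: 'a and c \<eta> :: real
  assumes "mv_operator T" and "SFix T = {xs}"
    and "admissible_G G"
    and "mv_operator F" and "SFix F \<noteq> {}"
    and "psi_function \<Psi>"
    and "psi_MP \<Psi> (perturb T G) xs" and "SFix (perturb T G) = {xs}"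
    and "c > 0" and "\<forall>x. infdist x (perturb T G x) \<le> c * infdist x (T x)"
    and "\<eta> > 0" and "\<forall>x. Hdist (T x) (F x) \<le> ereal \<eta>"
  shows "(\<forall>x. dist x xs \<le> \<Psi> (c * infdist x (T x))) \<and>
         (\<forall>ys\<in>SFix F. dist xs ys \<le> \<Psi> (c * \<eta>))"
proof -
  have dist_le: "dist x xs \<le> \<Psi> t" if "c * infdist x (T x) \<le> t" for x t
    using assms(7,6) assms(10)[rule_format, of x] that
    by (auto intro: psi_MP_dist_le)
  moreover have "dist xs ys \<le> \<Psi> (c * \<eta>)" if "ys \<in> SFix F" for ys
  proof -
    have "F ys = {ys}" using that unfolding SFix_def by blast
    then have "ereal (infdist ys (T ys)) \<le> ereal \<eta>"
      using infdist_le_Hdist_singleton[of ys "T ys"] assms(12) by (metis order_trans)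
    then have "c * infdist ys (T ys) \<le> c * \<eta>" using assms(9) by simp
    then show ?thesis by (metis dist_le dist_commute)
  qed
  ultimately show ?thesis by blast
qed

end
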